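(* Let $X$ be a real normed space, $\mathcal M=\{M_1,\dots,M_n\}\subset\mathcal P^f_{\mathrm{Cl,Conv}}(X)$, $\Sigma(\mathcal M)\neq\emptyset$ and $d=(d_1,\dots,d_n)\in\Omega(\mathcal M)$. Suppose there is an index $s$ such that every nonempty set of the form $B_r(M_s)\cap K_d$ ($0\le r<\infty$) lies in the same finiteness class as the $M_i$ (i.e. $d_H(B_r(M_s)\cap K_d,M_1)<\infty$). Then there exists $i$ with $d_i=\sup_{x\in M_i}|x\,K_d|$.
   Context: For a metric space $X$, $p\in X$, $A\subset X$: $|p\,A|=\inf_{a\in A}|p\,a|$ ($=\infty$ if $A=\emptyset$); for $0\le r<\infty$, $B_r(A)=\{p:|p\,A|\le r\}$. For nonempty $A,B$, $d_H(A,B)=\max\{\sup_{a\in A}|a\,B|,\sup_{b\in B}|b\,A|\}\in[0,\infty]$. $\mathcal P_{\mathrm{Cl}}(X)$ is the set of nonempty closed subsets of $X$ with $d_H$; a finiteness class is an equivalence class of $A\sim B\iff d_H(A,B)<\infty$. $\mathcal P^f_{\mathrm{Cl,Conv}}(X)$ denotes a fixed finiteness class of the space of nonempty closed convex subsets of $X$ (a family of nonempty closed convex sets pairwise at finite Hausdorff distance, maximal with this property); let $\mathcal P^f_{\mathrm{Cl}}(X)$ be the finiteness class of $\mathcal P_{\mathrm{Cl}}(X)$ containing it. For $\mathcal M=\{M_1,\dots,M_n\}$ in it, $S_{\mathcal M}(Y)=\sum_i d_H(Y,M_i)$; $\Sigma(\mathcal M)$ is the set of minimizers of $S_{\mathcal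 M}$ over $\mathcal P^f_{\mathrm{Cl}}(X)$; for $K\in\Sigma(\mathcal M)$, $d(K)=(d_H(K,M_1),\dots,d_H(K,M_n))$; $\Omega(\mathcal M)=\{d(K):K\in\Sigma(\mathcal M)\}$; for $d\in\Omega(\mathcal M)$, $\Sigma_d(\mathcal M)=\{K\in\Sigma(\mathcal M):d(K)=d\}$ and $K_d=\bigcap_{i=1}^nB_{d_i}(M_i)$. *)

theory Defs
  imports "HOL-Analysis.Analysis"
begin

definition pdist :: "'a::metric_space \<Rightarrow> 'a set \<Rightarrow> ereal" where
  "pdist p A = (if A = {} then \<infinity> else ereal (infdist p A))"

definition nbhd :: "real \<Rightarrow> 'a::metric_space set \<Rightarrow> 'a set" where
  "nbhd r A = {p. pdist p A \<le> ereal r}"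

definition dH :: "'a::metric_space set \<Rightarrow> 'a set \<Rightarrow> ereal" where
  "dH A B = max (SUP a\<in>A. pdist a B) (SUP b\<in>B. pdist b A)"

definition fin_class :: "(nat \<Rightarrow> 'a::metric_space set) \<Rightarrow> 'a set set" where
  "fin_class M = {Y. Y \<noteq> {} \<and> closed Y \<and> dH Y (M 0) < \<infinity>}"

definition S_M :: "nat \<Rightarrow> (nat \<Rightarrow> 'a::metric_space set) \<Rightarrow> 'a set \<Rightarrow> ereal" where
  "S_M n M Y = (\<Sum>i<n. dH Y (M i))"

definition Sigma_M :: "nat \<Rightarrow> (nat \<Rightarrow> 'a::metric_space set) \<Rightarrow> 'a set set" where
  "Sigma_M n M = {K \<in> fin_class M. \<forall>Y\<in>fin_class M. S_M n M K \<le> S_M n M Y}"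

definition Omega_M :: "nat \<Rightarrow> (nat \<Rightarrow> 'a::metric_space set) \<Rightarrow> (nat \<Rightarrow> real) set" where
  "Omega_M n M = {d. \<exists>K\<in>Sigma_M n M. \<forall>i<n. ereal (d i) = dH K (M i)}"

definition K_d :: "nat \<Rightarrow> (nat \<Rightarrow> 'a::metric_space set) \<Rightarrow> (nat \<Rightarrow> real) \<Rightarrow> 'a set" where
  "K_d n M d = (\<Inter>i<n. nbhd (d i) (M i))"

end

theory Submission
  imports Defs
begin

text \<open>
  Let \<open>K\<close> be a minimiser with \<open>d(K) = d\<close>. Then \<open>K \<subseteq> K\<^sub>d\<close>, so
  \<open>sup\<^sub>x\<^sub>\<in>\<^sub>M\<^sub>i |x K\<^sub>d| \<le> d\<^sub>i\<close> for every \<open>i\<close>. If all these inequalities were strict,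
  \<open>K\<^sub>d\<close> could be cut down to \<open>Y = B\<^sub>r(M\<^sub>s) \<inter> K\<^sub>d\<close> with \<open>r < d\<^sub>s\<close> while every
  point of \<open>K\<^sub>d\<close> stays \<open>\<epsilon>\<close>-close to \<open>Y\<close>: by convexity of \<open>K\<^sub>d\<close> and of
  \<open>x \<mapsto> |x M\<^sub>s|\<close>, a point of \<open>K\<^sub>d\<close> moved slightly towards a point of \<open>K\<^sub>d\<close>
  near \<open>M\<^sub>s\<close> gets strictly closer to \<open>M\<^sub>s\<close>. Then \<open>Y\<close> is still within \<open>d\<^sub>i\<close>
  of every \<open>M\<^sub>i\<close> and strictly closer than \<open>d\<^sub>s\<close> to \<open>M\<^sub>s\<close>, so
  \<open>S\<^sub>\<M>(Y) < S\<^sub>\<M>(K)\<close>, contradicting minimality.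
\<close>

lemma pdist_eq_infdist: "A \<noteq> {} \<Longrightarrow> pdist p A = ereal (infdist p A)"
  by (simp add: pdist_def)

lemma nbhd_eq_infdist_le: "A \<noteq> {} \<Longrightarrow> nbhd r A = {p. infdist p A \<le> r}"
  by (simp add: nbhd_def pdist_eq_infdist)

lemma dH_le_ereal_iff:
  assumes "A \<noteq> {}" "B \<noteq> {}"
  shows "dH A B \<le> ereal c \<longleftrightarrow> (\<forall>a\<in>A. infdist a B \<le> c) \<and> (\<forall>b\<in>B. infdist b A \<le> c)"
  using assms unfolding dH_def by (simp add: pdist_eq_infdist SUP_le_iff)

lemma infdist_less_imp_dist_less: "A \<noteq> {} \<Longrightarrow> infdist x A < t \<Longrightarrow> \<exists>a\<in>A. dist x a < t"
  by (simp add: infdist_notempty cINF_less_iff)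

lemma convex_on_infdist:
  fixes A :: "'a::real_normed_vector set"
  assumes A: "convex A" "A \<noteq> {}"
  shows "convex_on UNIV (\<lambda>x. infdist x A)"
proof (rule convex_onI)
  fix l :: real and x y :: 'a
  assume l: "0 < l" "l < 1"
  show "infdist ((1 - l) *\<^sub>R x + l *\<^sub>R y) A \<le> (1 - l) * infdist x A + l * infdist y A"
  proof (rule field_le_epsilon)
    fix e :: real assume e: "0 < e"
    obtain a where a: "a \<in> A" "dist x a < infdist x A + e"
      using infdist_less_imp_dist_less[OF A(2), of x "infdist x A + e"] e by auto
    obtain b where b: "b \<in> A" "dist y b < infdist y A + e"
      using infdist_less_imp_dist_less[OF A(2), of y "infdist y A + e"] e by auto
    have ab: "(1 - l) *\<^sub>R a + l *\<^sub>R b \<in> A"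
      using A(1) a(1) b(1) l by (simp add: convex_def)
    have "dist ((1 - l) *\<^sub>R x + l *\<^sub>R y) ((1 - l) *\<^sub>R a + l *\<^sub>R b)
        = norm ((1 - l) *\<^sub>R (x - a) + l *\<^sub>R (y - b))"
      by (simp add: dist_norm algebra_simps)
    also have "\<dots> \<le> (1 - l) * dist x a + l * dist y b"
      using l norm_triangle_ineq[of "(1 - l) *\<^sub>R (x - a)" "l *\<^sub>R (y - b)"]
      by (simp add: dist_norm)
    also have "\<dots> \<le> (1 - l) * (infdist x A + e) + l * (infdist y A + e)"
      using a b l by (intro add_mono mult_left_mono) auto
    also have "\<dots> = (1 - l) * infdist x A + l * infdist y A + e"
      by (simp add: algebra_simps)
    finally show "infdist ((1 - l) *\<^sub>R x + l *\<^sub>R y) A \<le> (1 - l) * infdist x A + l * infdist y A + e"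
      using infdist_le[OF ab, of "(1 - l) *\<^sub>R x + l *\<^sub>R y"] by linarith
  qed
qed simp

lemma convex_sublevel_convex_on:
  assumes "convex_on UNIV f"
  shows "convex {x. f x \<le> r}"
proof (rule convexI)
  fix x y and u v :: real
  assume h: "x \<in> {x. f x \<le> r}" "y \<in> {x. f x \<le> r}" "0 \<le> u" "0 \<le> v" "u + v = 1"
  have "u = 1 - v" using h(5) by simp
  have "f (u *\<^sub>R x + v *\<^sub>R y) \<le> u * f x + v * f y"
    using convex_onD[OF assms, of v x y] h by (simp add: \<open>u = 1 - v\<close>)
  also have "\<dots> \<le> u * r + v * r"
    using h by (intro add_mono mult_left_mono) auto
  finally show "u *\<^sub>R x + v *\<^sub>R y \<in> {x. f x \<le> r}"
    using h(5) by (simp add: distrib_right[symmetric])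
qed

lemma K_d_eq_Inter_infdist_le:
  "\<forall>i<n. M i \<noteq> {} \<Longrightarrow> K_d n M d = (\<Inter>i<n. {x. infdist x (M i) \<le> d i})"
  unfolding K_d_def by (auto simp: nbhd_eq_infdist_le)

lemma convex_K_d:
  fixes M :: "nat \<Rightarrow> 'a::real_normed_vector set"
  assumes "\<forall>i<n. M i \<noteq> {} \<and> convex (M i)"
  shows "convex (K_d n M d)"
  using assms
  by (subst K_d_eq_Inter_infdist_le) (auto intro!: convex_INT convex_sublevel_convex_on convex_on_infdist)

lemma closed_K_d:
  assumes "\<forall>i<n. M i \<noteq> {}"
  shows "closed (K_d n M d)"
  unfolding K_d_eq_Inter_infdist_le[OF assms]
  by (intro closed_INT ballI closed_Collect_le continuous_on_infdist continuous_on_id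
      continuous_on_const)

lemma closed_nbhd:
  assumes "A \<noteq> {}"
  shows "closed (nbhd r A)"
  unfolding nbhd_eq_infdist_le[OF assms]
  by (intro closed_Collect_le continuous_on_infdist continuous_on_id continuous_on_const)

lemma subset_K_d:
  assumes "K \<noteq> {}" "\<forall>i<n. M i \<noteq> {} \<and> dH K (M i) = ereal (d i)"
  shows "K \<subseteq> K_d n M d"
proof -
  have "\<forall>x\<in>K. infdist x (M i) \<le> d i" if "i < n" for i
    using assms that dH_le_ereal_iff[OF assms(1), of "M i" "d i"] by auto
  then show ?thesis
    using assms(2) by (auto simp: K_d_eq_Inter_infdist_le)
qed

lemma SUP_pdist_K_d_le:
  assumes "K \<noteq> {}" "\<forall>i<n. M i \<noteq> {} \<and> dH K (M i) = ereal (d i)" "i < n"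
  shows "(SUP x\<in>M i. pdist x (K_d n M d)) \<le> ereal (d i)"
proof (rule SUP_least)
  fix x assume x: "x \<in> M i"
  have "infdist x (K_d n M d) \<le> infdist x K"
    using subset_K_d[OF assms(1,2)] assms(1) by (rule infdist_mono)
  also have "\<dots> \<le> d i"
    using assms x dH_le_ereal_iff[OF assms(1), of "M i" "d i"] by auto
  moreover have "K_d n M d \<noteq> {}"
    using subset_K_d[OF assms(1,2)] assms(1) by blast
  ultimately show "pdist x (K_d n M d) \<le> ereal (d i)"
    by (simp add: pdist_eq_infdist)
qed

lemma uniform_gap_SUP_pdist:
  fixes M :: "nat \<Rightarrow> 'a::metric_space set"
  assumes "C \<noteq> {}" "\<forall>i<n. (SUP x\<in>M i. pdist x C) < ereal (d i)"
  obtains e :: real where "0 < e" "\<forall>i<n. \<forall>x\<in>M i. infdist x C + e \<le> d i"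
proof -
  have gap: "\<forall>\<^sub>F e in at_right 0. \<forall>x\<in>M i. infdist x C + e \<le> d i" if i: "i \<in> {..<n}" for i
  proof -
    have "(SUP x\<in>M i. pdist x C) < ereal (d i)"
      using assms(2) i by simp
    then obtain z where z: "(SUP x\<in>M i. pdist x C) < ereal z" "ereal z < ereal (d i)"
      using ereal_dense2 by blast
    have bound: "\<forall>x\<in>M i. infdist x C \<le> z"
    proof
      fix x assume "x \<in> M i"
      then have "pdist x C < ereal z"
        using z(1) by (rule SUP_upper[THEN le_less_trans])
      then show "infdist x C \<le> z"
        using assms(1) by (simp add: pdist_eq_infdist)
    qed
    have "\<forall>\<^sub>F e in at_right 0. e < d i - z"
      using z(2) by (intro eventually_at_rightI[of 0 "d i - z"]) auto
    then show ?thesis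
      by (rule eventually_mono) (use bound in fastforce)
  qed
  have "\<forall>\<^sub>F e in at_right 0. \<forall>i\<in>{..<n}. \<forall>x\<in>M i. infdist x C + e \<le> d i"
    using gap by (intro eventually_ball_finite) auto
  with eventually_at_right_less[of "0::real"]
  have "\<forall>\<^sub>F e in at_right 0. 0 < e \<and> (\<forall>i\<in>{..<n}. \<forall>x\<in>M i. infdist x C + e \<le> d i)"
    by (rule eventually_conj)
  then obtain e where "0 < e \<and> (\<forall>i\<in>{..<n}. \<forall>x\<in>M i. infdist x C + e \<le> d i)"
    using eventually_happens'[OF trivial_limit_at_right_real] by blast
  then show ?thesis
    using that by auto
qed

text \<open>
  The point \<open>y\<close> is \<open>x\<close> moved by the fraction \<open>l\<close> towards a point \<open>q \<in> C\<close> lying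
  within \<open>c + g\<close> of \<open>A\<close>, where \<open>g = (d - c) / 2\<close>; convexity of \<open>infdist \<cdot> A\<close>
  then gives \<open>infdist y A \<le> d - l g\<close>.
\<close>
lemma convex_sublevel_cut_approximates:
  fixes A C :: "'a::real_normed_vector set"
  assumes A: "convex A" "A \<noteq> {}" and C: "convex C" "C \<noteq> {}"
    and C_near: "\<forall>x\<in>C. infdist x A \<le> d" and A_near: "\<forall>a\<in>A. infdist a C \<le> c"
    and "c < d" "0 < e"
  obtains r where "0 \<le> r" "r < d" "\<forall>x\<in>C. \<exists>y\<in>C. infdist y A \<le> r \<and> dist x y \<le> e"
proof -
  obtain a where "a \<in> A" using A(2) by blast
  then have "0 \<le> c" using A_near infdist_nonneg order_trans by blast
  define g where "g = (d - c) / 2"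
  define l where "l = min 1 (e / (2 * d))"
  have g: "0 < g" "c + g < d" using \<open>c < d\<close> by (simp_all add: g_def field_simps)
  have l: "0 < l" "l \<le> 1" "l * (2 * d) \<le> e"
    using \<open>0 < e\<close> \<open>0 \<le> c\<close> \<open>c < d\<close> by (auto simp: l_def min_def field_simps)
  have cut: "\<exists>y\<in>C. infdist y A \<le> d - l * g \<and> dist x y \<le> e" if x: "x \<in> C" for x
  proof -
    obtain p where p: "p \<in> A" "dist x p < d + g"
      using infdist_less_imp_dist_less[OF A(2), of x "d + g"] C_near x g by fastforce
    obtain q where q: "q \<in> C" "dist p q < c + g"
      using infdist_less_imp_dist_less[OF C(2), of p "c + g"] A_near p g by fastforce
    define y where "y = (1 - l) *\<^sub>R x + l *\<^sub>R q"
    have "y \<in> C" using C(1) x q(1) l by (simp add: convex_def y_def)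
    have "infdist q A \<le> c + g"
      using infdist_le[OF p(1), of q] q(2) by (simp add: dist_commute)
    have "infdist y A \<le> (1 - l) * infdist x A + l * infdist q A"
      using convex_onD[OF convex_on_infdist[OF A], of l x q] l by (simp add: y_def)
    also have "\<dots> \<le> (1 - l) * d + l * (c + g)"
      using C_near x l \<open>infdist q A \<le> c + g\<close> by (intro add_mono mult_left_mono) auto
    also have "\<dots> = d - l * g" by (simp add: g_def algebra_simps)
    finally have "infdist y A \<le> d - l * g" .
    have "dist x q < 2 * d"
      using dist_triangle[of x q p] p(2) q(2) unfolding g_def by (simp add: field_simps)
    then have "dist x y \<le> l * (2 * d)"
      using l by (simp add: y_def dist_norm algebra_simps flip: scaleR_diff_right)
    then show ?thesis
      using \<open>y \<in> C\<close> \<open>infdist y A \<le> d - l * g\<close> l by fastforce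
  qed
  have "l * g \<le> g" "0 < l * g"
    using l g by (simp_all add: mult_left_le_one_le)
  moreover have "g \<le> d"
    using \<open>0 \<le> c\<close> \<open>c < d\<close> by (simp add: g_def)
  ultimately have "0 \<le> d - l * g" "d - l * g < d"
    by linarith+
  with cut show ?thesis using that by blast
qed

lemma exists_closer_cut:
  fixes M :: "nat \<Rightarrow> 'a::real_normed_vector set"
  assumes M: "\<forall>i<n. M i \<noteq> {}" "convex (M s)" "s < n"
    and C: "convex C" "C \<noteq> {}" "\<forall>i<n. \<forall>x\<in>C. infdist x (M i) \<le> d i"
    and gap: "\<forall>i<n. (SUP x\<in>M i. pdist x C) < ereal (d i)"
  obtains r where "0 \<le> r" "nbhd r (M s) \<inter> C \<noteq> {}"
    "\<forall>i<n. dH (nbhd r (M s) \<inter> C) (M i) \<le> ereal (d i)"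
    "dH (nbhd r (M s) \<inter> C) (M s) < ereal (d s)"
proof -
  obtain e where e: "0 < e" "\<forall>i<n. \<forall>x\<in>M i. infdist x C + e \<le> d i"
    using uniform_gap_SUP_pdist[OF C(2) gap] by blast
  obtain r where r: "0 \<le> r" "r < d s"
    and dense: "\<forall>x\<in>C. \<exists>y\<in>C. infdist y (M s) \<le> r \<and> dist x y \<le> e / 4"
    by (rule convex_sublevel_cut_approximates[of "M s" C "d s" "d s - e" "e / 4"])
      (use M C e in \<open>auto simp: le_diff_eq\<close>)
  define Y where "Y = nbhd r (M s) \<inter> C"
  have Y: "Y = {y \<in> C. infdist y (M s) \<le> r}"
    using M by (auto simp: Y_def nbhd_eq_infdist_le)
  have "Y \<noteq> {}"
    using C(2) dense unfolding Y by blast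
  have Y_near: "infdist m Y \<le> d i - e / 2" if i: "i < n" and m: "m \<in> M i" for i m
  proof -
    obtain k where k: "k \<in> C" "dist m k < d i - 3 * e / 4"
      using infdist_less_imp_dist_less[OF C(2), of m "d i - 3 * e / 4"] e i m by fastforce
    obtain y where y: "y \<in> Y" "dist k y \<le> e / 4"
      using dense k(1) unfolding Y by blast
    have "infdist m Y \<le> dist m y" by (rule infdist_le[OF y(1)])
    also have "\<dots> \<le> dist m k + dist k y" by (rule dist_triangle)
    finally show ?thesis using k(2) y(2) by linarith
  qed
  have "dH Y (M i) \<le> ereal (d i)" if i: "i < n" for i
    using \<open>Y \<noteq> {}\<close> M(1) i C(3) Y_near e(1)
    by (subst dH_le_ereal_iff) (auto simp: Y, fastforce)
  moreover have "dH Y (M s) \<le> ereal (max r (d s - e / 2))"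
    using \<open>Y \<noteq> {}\<close> M Y_near
    by (subst dH_le_ereal_iff) (auto simp: Y le_max_iff_disj)
  then have "dH Y (M s) < ereal (d s)"
    using r(2) e(1) by (simp add: le_less_trans)
  ultimately show ?thesis
    using that r(1) \<open>Y \<noteq> {}\<close> unfolding Y_def by blast
qed

lemma S_M_less_sum:
  assumes "s < n" "\<forall>i<n. dH Y (M i) \<le> ereal (d i)" "dH Y (M s) < ereal (d s)"
  shows "S_M n M Y < ereal (\<Sum>i<n. d i)"
proof -
  obtain t where t: "dH Y (M s) < ereal t" "ereal t < ereal (d s)"
    using ereal_dense2[OF assms(3)] by blast
  have "S_M n M Y \<le> (\<Sum>i<n. ereal ((d(s := t)) i))"
    unfolding S_M_def by (rule sum_mono) (use assms t(1) in auto)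
  also have "\<dots> = ereal (\<Sum>i<n. (d(s := t)) i)"
    by simp
  also have "\<dots> < ereal (\<Sum>i<n. d i)"
    using assms(1) t(2) by (simp add: sum_strict_mono_ex1)
  finally show ?thesis .
qed

lemma Sigma_M_sum_le_S_M:
  assumes "K \<in> Sigma_M n M" "\<forall>i<n. dH K (M i) = ereal (d i)" "Y \<in> fin_class M"
  shows "ereal (\<Sum>i<n. d i) \<le> S_M n M Y"
proof -
  have "S_M n M K = ereal (\<Sum>i<n. d i)"
    using assms(2) by (simp add: S_M_def)
  then show ?thesis
    using assms(1,3) by (auto simp: Sigma_M_def)
qed

theorem mainTheorem14:
  fixes M :: "nat \<Rightarrow> 'a::real_normed_vector set" and n :: nat and d :: "nat \<Rightarrow> real"
  assumes "0 < n"
    and "\<forall>i<n. M i \<noteq> {} \<and> closed (M i) \<and> convex (M i)"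
    and "\<forall>i<n. \<forall>j<n. dH (M i) (M j) < \<infinity>"
    and "Sigma_M n M \<noteq> {}"
    and "d \<in> Omega_M n M"
    and "\<exists>s<n. \<forall>r\<ge>0. nbhd r (M s) \<inter> K_d n M d \<noteq> {} \<longrightarrow>
                  dH (nbhd r (M s) \<inter> K_d n M d) (M 0) < \<infinity>"
  shows "\<exists>i<n. ereal (d i) = (SUP x\<in>M i. pdist x (K_d n M d))"
proof (rule ccontr)
  assume no_attained: "\<not> ?thesis"
  obtain s where s: "s < n" and cut_fin: "\<forall>r\<ge>0. nbhd r (M s) \<inter> K_d n M d \<noteq> {} \<longrightarrow>
      dH (nbhd r (M s) \<inter> K_d n M d) (M 0) < \<infinity>"
    using assms(6) by blast
  obtain K where K: "K \<in> Sigma_M n M" "\<forall>i<n. dH K (M i) = ereal (d i)"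
    using assms(5) by (auto simp: Omega_M_def)
  have "K \<noteq> {}" using K(1) by (simp add: Sigma_M_def fin_class_def)
  define C where "C = K_d n M d"
  have "C \<noteq> {}" using subset_K_d[of K n M d] \<open>K \<noteq> {}\<close> K(2) assms(2) by (auto simp: C_def)
  have C_near: "\<forall>i<n. \<forall>x\<in>C. infdist x (M i) \<le> d i"
    using assms(2) by (simp add: C_def K_d_eq_Inter_infdist_le)
  have gap: "\<forall>i<n. (SUP x\<in>M i. pdist x C) < ereal (d i)"
    using SUP_pdist_K_d_le[of K n M d] \<open>K \<noteq> {}\<close> K(2) assms(2) no_attained
    by (auto simp: C_def order_less_le)
  obtain r where r: "0 \<le> r" "nbhd r (M s) \<inter> C \<noteq> {}"
      "\<forall>i<n. dH (nbhd r (M s) \<inter> C) (M i) \<le> ereal (d i)"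
      "dH (nbhd r (M s) \<inter> C) (M s) < ereal (d s)"
    by (rule exists_closer_cut[OF _ _ s _ \<open>C \<noteq> {}\<close> C_near gap])
      (use assms(2) s convex_K_d[of n M d] in \<open>auto simp: C_def\<close>)
  have "closed (nbhd r (M s) \<inter> C)"
    using assms(2) s by (simp add: C_def closed_Int closed_nbhd closed_K_d)
  then have "nbhd r (M s) \<inter> C \<in> fin_class M"
    using r(1,2) cut_fin by (simp add: fin_class_def C_def)
  then show False
    using S_M_less_sum[OF s r(3,4)] Sigma_M_sum_le_S_M[OF K] by (simp add: not_le[symmetric])
qed

end
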